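(* In the setting described in the context, assume (F1) and (F2), let $\gamma=\frac{\beta L}{L+\beta}$, and let $\alpha\in\big(0,\frac{2}{L+\beta}\big]$. Then for all $t\ge0$, $$\|\bar w(t+1)-w_*\|\le\Big(1-\gamma\alpha+\frac{\alpha L\delta}{n}\|1_n-n\pi\|_\pi\sigma_W^t\Big)\|\bar w(t)-w_*\|+\frac{\alpha L\delta}{n}\|n\pi\otimes\bar w(t)-w(t)\|_{\pi\otimes1_d}+\frac{\alpha L\delta}{n}\|1_n-n\pi\|_\pi\sigma_W^t\|w_*\|.$$
   Context: $G=(V,E)$ directed on $\{1,\dots,n\}$, self-loop at each vertex, strongly connected; $d_j=|\{i:(j,i)\in E\}|$, $W_{ij}=1/d_j$ if $(j,i)\in E$, else $0$. $\pi$: $W\pi=\pi$, $\pi_i>0$, $\sum\pi_i=1$; $W^\infty=\pi1_n^\top$ (so $(W^\infty\otimes I_d)w=n\pi\otimes\bar w$). $\|x\|_\pi=(\sum_ix_i^2/\pi_i)^{1/2}$ on $\mathbb R^n$, $|||\cdot|||_\pi$ the induced operator norm, $\sigma_W=|||W-W^\infty|||_\pi$ (known $<1$). On $\mathbb R^{nd}$, $\|x\|_{\pi\otimes1_d}=(\sum_i\|x_i\|^2/\pi_i)^{1/2}$. $v\otimes u=\mathrm{col}(v_1u,\dots,v_nu)$. $f_i:\mathbb R^d\to\mathbb R$, $f=\frac1n\sum f_i$; (F1) each $\nabla f_i$ is $L_i$-Lipschitz, $L=\max L_i$; (F2) $f$ is $\beta$-strongly convex, $\beta>0$; $w_*$ is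 the minimizer of $f$. Algorithm with stepsize $\alpha>0$: given $w(0)\in\mathbb R^{nd}$, $y(0)=1_n$; for $t\ge0$: $z_i(t)=w_i(t)/y_i(t)$, $x_i(t)=w_i(t)-\alpha\nabla f_i(z_i(t))$, $w_i(t+1)=\sum_jW_{ij}x_j(t)$, $y_i(t+1)=\sum_jW_{ij}y_j(t)$. $\bar w(t)=\frac1n\sum_iw_i(t)$, $\delta=\sup_{t\ge0}\max_i1/y_i(t)$. *)

theory Defs
  imports "HOL-Analysis.Analysis"
begin

text \<open>Vertices are 1..n; vectors in R^n are functions nat => real (only indices 1..n matter);
 stacked vectors in R^(nd) are functions nat => 'a, 'a a Euclidean space (R^d).\<close>

definition outdeg :: "(nat \<times> nat) set \<Rightarrow> nat \<Rightarrow> nat" where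
  "outdeg E j = card {i. (j, i) \<in> E}"

definition Wmat :: "(nat \<times> nat) set \<Rightarrow> nat \<Rightarrow> nat \<Rightarrow> real" where
  "Wmat E i j = (if (j, i) \<in> E then 1 / real (outdeg E j) else 0)"

definition strongly_connected_on :: "nat \<Rightarrow> (nat \<times> nat) set \<Rightarrow> bool" where
  "strongly_connected_on n E \<longleftrightarrow> (\<forall>i\<in>{1..n}. \<forall>j\<in>{1..n}. (i, j) \<in> E\<^sup>*)"

definition pinorm :: "nat \<Rightarrow> (nat \<Rightarrow> real) \<Rightarrow> (nat \<Rightarrow> real) \<Rightarrow> real" where
  "pinorm n p x = sqrt (\<Sum>i=1..n. (x i)\<^sup>2 / p i)"

definition pinorm_blk :: "nat \<Rightarrow> (nat \<Rightarrow> real) \<Rightarrow> (nat \<Rightarrow> 'a::real_normed_vector) \<Rightarrow> real" where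
  "pinorm_blk n p x = sqrt (\<Sum>i=1..n. (norm (x i))\<^sup>2 / p i)"

definition matvec :: "nat \<Rightarrow> (nat \<Rightarrow> nat \<Rightarrow> real) \<Rightarrow> (nat \<Rightarrow> real) \<Rightarrow> (nat \<Rightarrow> real)" where
  "matvec n M x = (\<lambda>i. \<Sum>j=1..n. M i j * x j)"

definition pi_opnorm :: "nat \<Rightarrow> (nat \<Rightarrow> real) \<Rightarrow> (nat \<Rightarrow> nat \<Rightarrow> real) \<Rightarrow> real" where
  "pi_opnorm n p M = Sup {pinorm n p (matvec n M x) | x. pinorm n p x \<le> 1}"

text \<open>sigma_W = |||W - W^infinity|||_pi with W^infinity = pi 1_n^T\<close>
definition sigmaW :: "nat \<Rightarrow> (nat \<times> nat) set \<Rightarrow> (nat \<Rightarrow> real) \<Rightarrow> real" where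
  "sigmaW n E p = pi_opnorm n p (\<lambda>i j. Wmat E i j - p i)"

definition strongly_convex_with :: "real \<Rightarrow> ('a::real_normed_vector \<Rightarrow> real) \<Rightarrow> bool" where
  "strongly_convex_with \<beta> f \<longleftrightarrow> (\<forall>x y. \<forall>u\<in>{0..1}.
     f ((1 - u) *\<^sub>R x + u *\<^sub>R y) \<le> (1 - u) * f x + u * f y - \<beta> / 2 * u * (1 - u) * (norm (x - y))\<^sup>2)"

fun yseq :: "nat \<Rightarrow> (nat \<times> nat) set \<Rightarrow> nat \<Rightarrow> nat \<Rightarrow> real" where
  "yseq n E 0 = (\<lambda>i. 1)"
| "yseq n E (Suc t) = (\<lambda>i. \<Sum>j=1..n. Wmat E i j * yseq n E t j)"

fun wseq :: "nat \<Rightarrow> (nat \<times> nat) set \<Rightarrow> real \<Rightarrow> (nat \<Rightarrow> 'a::real_normed_vector \<Rightarrow> 'a)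
   \<Rightarrow> (nat \<Rightarrow> 'a) \<Rightarrow> nat \<Rightarrow> nat \<Rightarrow> 'a" where
  "wseq n E \<alpha> g w0 0 = w0"
| "wseq n E \<alpha> g w0 (Suc t) = (\<lambda>i. \<Sum>j=1..n. Wmat E i j *\<^sub>R
      (wseq n E \<alpha> g w0 t j - \<alpha> *\<^sub>R g j ((1 / yseq n E t j) *\<^sub>R wseq n E \<alpha> g w0 t j)))"

definition wbar :: "nat \<Rightarrow> (nat \<Rightarrow> 'a::real_vector) \<Rightarrow> 'a" where
  "wbar n w = (1 / real n) *\<^sub>R (\<Sum>i=1..n. w i)"

definition deltaY :: "nat \<Rightarrow> (nat \<times> nat) set \<Rightarrow> real" where
  "deltaY n E = (SUP t. Max ((\<lambda>i. 1 / yseq n E t i) ` {1..n}))"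

end

(*
  Because W is column stochastic, the network average evolves as
    wbar(t+1) = wbar(t) - (alpha/n) sum_j grad f_j(z_j(t)),
  i.e. as the exact gradient step wbar - alpha grad f(wbar), perturbed by
  (alpha/n) sum_j (grad f_j(wbar) - grad f_j(z_j)). For L-smooth, beta-strongly convex f
  and alpha <= 2/(L + beta), co-coercivity of grad f makes the exact step a
  (1 - gamma alpha)-contraction towards w_*. Each perturbation term is at most
  L ||wbar - w_j/y_j|| <= L delta (|y_j - n pi_j| ||wbar|| + ||n pi_j wbar - w_j||); summing,
  sum_j |a_j| <= ||a||_pi by Cauchy-Schwarz (as sum_j pi_j = 1), and
  y(t) - n pi = (W - W^infinity)^t (1 - n pi) yields the factor sigma_W^t.
  Finally delta is finite: self loops and strong connectivity give y_i(t) >= n^(-K)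
  for a common path length K.
*)

theory Submission
  imports Defs
begin

section \<open>Smooth strongly convex functions\<close>

lemma GDERIV_along_line:
  fixes F :: "'a::real_inner \<Rightarrow> real"
  assumes "\<And>x. GDERIV F x :> G x"
  shows "((\<lambda>s. F (x + s *\<^sub>R d)) has_real_derivative inner d (G (x + s *\<^sub>R d))) (at s)"
proof -
  have "((\<lambda>s. x + s *\<^sub>R d) has_derivative (\<lambda>h. h *\<^sub>R d)) (at s)"
    by (auto intro!: derivative_eq_intros)
  from has_derivative_compose[OF this assms[unfolded gderiv_def]]
  show ?thesis
    by (simp add: has_field_derivative_def mult.commute[of _ "inner d (G (x + s *\<^sub>R d))"])
qed

lemma lipschitz_gradient_upper_bound:
  fixes F :: "'a::real_inner \<Rightarrow> real"
  assumes deriv: "\<And>x. GDERIV F x :> G x" and lip: "L-lipschitz_on UNIV G"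
  shows "F y \<le> F x + inner (G x) (y - x) + L / 2 * (norm (y - x))\<^sup>2"
proof -
  define d where "d = y - x"
  define k where "k s = F (x + s *\<^sub>R d) - s * inner d (G x) - L / 2 * s\<^sup>2 * (norm d)\<^sup>2" for s
  have "k 1 \<le> k 0"
  proof (rule DERIV_nonpos_imp_nonincreasing[of 0 1 k])
    fix s :: real assume s: "0 \<le> s" "s \<le> 1"
    have "(k has_real_derivative inner d (G (x + s *\<^sub>R d) - G x) - L * s * (norm d)\<^sup>2) (at s)"
      unfolding k_def
      by (rule derivative_eq_intros GDERIV_along_line[OF deriv] refl | simp add: inner_diff_right)+
    moreover have "inner d (G (x + s *\<^sub>R d) - G x) \<le> L * s * (norm d)\<^sup>2"
    proof -
      have "inner d (G (x + s *\<^sub>R d) - G x) \<le> norm d * norm (G (x + s *\<^sub>R d) - G x)"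
        by (rule norm_cauchy_schwarz)
      also have "\<dots> \<le> norm d * (L * norm (s *\<^sub>R d))"
        using lipschitz_on_normD[OF lip, of "x + s *\<^sub>R d" x] by (intro mult_left_mono) auto
      also have "\<dots> = L * s * (norm d)\<^sup>2"
        using s by (simp add: power2_eq_square)
      finally show ?thesis .
    qed
    ultimately show "\<exists>y. (k has_real_derivative y) (at s) \<and> y \<le> 0"
      by auto
  qed simp
  then show ?thesis
    by (simp add: k_def d_def inner_commute)
qed

lemma strongly_convex_with_gradient_lower_bound:
  fixes F :: "'a::real_inner \<Rightarrow> real"
  assumes deriv: "\<And>x. GDERIV F x :> G x" and sc: "strongly_convex_with \<beta> F"
  shows "F x + inner (G x) (y - x) + \<beta> / 2 * (norm (y - x))\<^sup>2 \<le> F y"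
proof -
  define d where "d = y - x"
  define q where "q s = F y - F x - \<beta> / 2 * (1 - s) * (norm d)\<^sup>2" for s
  have "((\<lambda>s. F (x + s *\<^sub>R d)) has_real_derivative inner d (G x)) (at 0)"
    using GDERIV_along_line[OF deriv, of x d 0] by simp
  then have slope: "((\<lambda>s. (F (x + s *\<^sub>R d) - F x) / s) \<longlongrightarrow> inner d (G x)) (at_right 0)"
    unfolding has_field_derivative_iff by (auto intro: tendsto_mono[OF at_le])
  have "(q \<longlongrightarrow> q 0) (at_right 0)"
    unfolding q_def by (intro tendsto_intros)
  moreover have "eventually (\<lambda>s. (F (x + s *\<^sub>R d) - F x) / s \<le> q s) (at_right 0)"
    unfolding eventually_at_right[OF zero_less_one]
  proof (intro exI[of _ 1] conjI allI impI)
    fix s :: real assume s: "0 < s" "s < 1"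
    have "F ((1 - s) *\<^sub>R x + s *\<^sub>R y) \<le> (1 - s) * F x + s * F y - \<beta> / 2 * s * (1 - s) * (norm (x - y))\<^sup>2"
      using sc s unfolding strongly_convex_with_def by auto
    moreover have "(1 - s) *\<^sub>R x + s *\<^sub>R y = x + s *\<^sub>R d"
      by (simp add: d_def algebra_simps)
    moreover have "norm (x - y) = norm d"
      by (simp add: d_def norm_minus_commute)
    ultimately have "F (x + s *\<^sub>R d) - F x \<le> s * q s"
      by (simp add: q_def algebra_simps)
    then show "(F (x + s *\<^sub>R d) - F x) / s \<le> q s"
      using s by (simp add: divide_simps mult.commute)
  qed simp
  ultimately have "inner d (G x) \<le> q 0"
    using slope by (intro tendsto_le[of "at_right 0"]) simp_all
  then show ?thesis
    by (simp add: q_def d_def inner_commute)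
qed

lemma norm_diff_scaleR_square:
  fixes u v :: "'a::real_inner"
  shows "(norm (u - c *\<^sub>R v))\<^sup>2 = (norm u)\<^sup>2 - 2 * c * inner u v + c\<^sup>2 * (norm v)\<^sup>2"
  unfolding power2_norm_eq_inner
  by (simp add: inner_diff_left inner_diff_right inner_commute algebra_simps power2_eq_square)

lemma gradient_cocoercive:
  fixes \<phi> :: "'a::real_inner \<Rightarrow> real"
  assumes lower: "\<And>x z. \<phi> x + inner (h x) (z - x) \<le> \<phi> z"
    and upper: "\<And>x z. \<phi> z \<le> \<phi> x + inner (h x) (z - x) + M / 2 * (norm (z - x))\<^sup>2"
    and "M > 0"
  shows "(norm (h y - h x))\<^sup>2 \<le> M * inner (h y - h x) (y - x)"
proof -
  have gap: "\<phi> u + inner (h u) (v - u) + (norm (h v - h u))\<^sup>2 / (2 * M) \<le> \<phi> v" for u v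
  proof -
    define a where "a = h v - h u"
    \<comment> \<open>the gradient step from \<open>v\<close> for \<open>\<phi> - \<langle>h u, \<cdot>\<rangle>\<close>, which is minimal at \<open>u\<close>\<close>
    define z where "z = v - (1 / M) *\<^sub>R a"
    have "\<phi> u + inner (h u) (z - u) \<le> \<phi> z"
      by (rule lower)
    also have "\<phi> z \<le> \<phi> v + inner (h v) (z - v) + M / 2 * (norm (z - v))\<^sup>2"
      by (rule upper)
    finally have "\<phi> u + inner (h u) (v - u) \<le> \<phi> v + inner a (z - v) + M / 2 * (norm (z - v))\<^sup>2"
      by (simp add: a_def inner_diff_left inner_diff_right)
    moreover have "inner a (z - v) = - (norm a)\<^sup>2 / M" and "(norm (z - v))\<^sup>2 = (norm a)\<^sup>2 / M\<^sup>2"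
      using \<open>M > 0\<close> by (simp_all add: z_def power2_norm_eq_inner power_divide)
    moreover have "- (norm a)\<^sup>2 / M + M / 2 * ((norm a)\<^sup>2 / M\<^sup>2) = - (norm a)\<^sup>2 / (2 * M)"
      using \<open>M > 0\<close> by (simp add: power2_eq_square field_simps)
    ultimately show ?thesis
      by (simp add: a_def)
  qed
  have "inner (h y - h x) (y - x) = - (inner (h x) (y - x) + inner (h y) (x - y))"
    by (simp add: inner_diff_left inner_diff_right)
  then have "(norm (h y - h x))\<^sup>2 / M \<le> inner (h y - h x) (y - x)"
    using gap[of x y] gap[of y x] by (simp add: norm_minus_commute field_simps)
  then show ?thesis
    using \<open>M > 0\<close> by (simp add: field_simps)
qed

lemma le_mult_of_forall_gt:
  fixes A B c :: real
  assumes le: "\<And>M. c < M \<Longrightarrow> A \<le> M * B" and "0 \<le> A" and "0 \<le> c"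
  shows "A \<le> c * B"
proof -
  have "0 \<le> (c + 1) * B"
    using le[of "c + 1"] \<open>0 \<le> A\<close> by simp
  then have "0 \<le> B"
    using \<open>0 \<le> c\<close> by (simp add: zero_le_mult_iff)
  show ?thesis
  proof (cases "B = 0")
    case True
    then show ?thesis
      using le[of "c + 1"] by simp
  next
    case False
    with \<open>0 \<le> B\<close> have "0 < B"
      by simp
    have "A / B \<le> c"
    proof (rule dense_ge)
      fix M assume "c < M"
      then show "A / B \<le> M"
        using le[of M] by (simp only: pos_divide_le_eq[OF \<open>0 < B\<close>])
    qed
    then show ?thesis
      by (simp only: pos_divide_le_eq[OF \<open>0 < B\<close>] mult.commute)
  qed
qed

lemma strongly_convex_gradient_cocoercive:
  fixes F :: "'a::real_inner \<Rightarrow> real"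
  assumes deriv: "\<And>x. GDERIV F x :> G x" and sc: "strongly_convex_with \<beta> F"
    and lip: "L-lipschitz_on UNIV G" and "\<beta> \<le> L"
  shows "(norm (G x - G y))\<^sup>2 + L * \<beta> * (norm (x - y))\<^sup>2 \<le> (L + \<beta>) * inner (G x - G y) (x - y)"
proof -
  \<comment> \<open>\<open>\<phi> = F - \<beta>/2 \<parallel>\<cdot>\<parallel>\<^sup>2\<close> is convex with \<open>(L - \<beta>)\<close>-Lipschitz gradient \<open>h\<close>.\<close>
  define \<phi> where "\<phi> z = F z - \<beta> / 2 * (norm z)\<^sup>2" for z
  define h where "h z = G z - \<beta> *\<^sub>R z" for z
  have gap: "\<phi> z - (\<phi> u + inner (h u) (z - u))
      = F z - (F u + inner (G u) (z - u)) - \<beta> / 2 * (norm (z - u))\<^sup>2" for z u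
    unfolding \<phi>_def h_def power2_norm_eq_inner
    by (simp add: inner_diff_left inner_diff_right inner_commute algebra_simps)
  have lower: "\<phi> u + inner (h u) (z - u) \<le> \<phi> z" for u z
    using strongly_convex_with_gradient_lower_bound[OF deriv sc, of u z] gap[of z u] by linarith
  have upper: "\<phi> z \<le> \<phi> u + inner (h u) (z - u) + M / 2 * (norm (z - u))\<^sup>2"
    if "L - \<beta> \<le> M" for u z M
  proof -
    have "(L - \<beta>) / 2 * (norm (z - u))\<^sup>2 \<le> M / 2 * (norm (z - u))\<^sup>2"
      using that by (intro mult_right_mono) auto
    then show ?thesis
      using lipschitz_gradient_upper_bound[OF deriv lip, of z u] gap[of z u]
      by (simp add: algebra_simps)
  qed
  define a where "a = h x - h y"
  have M_bound: "(norm a)\<^sup>2 \<le> M * inner a (x - y)" if "L - \<beta> < M" for M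
    unfolding a_def using that \<open>\<beta> \<le> L\<close>
    by (intro gradient_cocoercive[of \<phi> h] lower upper) auto
  \<comment> \<open>\<open>gradient_cocoercive\<close> needs \<open>M > 0\<close>, while \<open>L - \<beta>\<close> may vanish\<close>
  have bound: "(norm a)\<^sup>2 \<le> (L - \<beta>) * inner a (x - y)"
    by (rule le_mult_of_forall_gt[OF M_bound]) (use \<open>\<beta> \<le> L\<close> in simp_all)
  have a_eq: "a = (G x - G y) - \<beta> *\<^sub>R (x - y)"
    by (simp add: a_def h_def algebra_simps)
  define P where "P = inner (G x - G y) (x - y)"
  define Q where "Q = (norm (G x - G y))\<^sup>2"
  define R where "R = (norm (x - y))\<^sup>2"
  have "(norm a)\<^sup>2 = Q - 2 * \<beta> * P + \<beta>\<^sup>2 * R"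
    unfolding a_eq P_def Q_def R_def by (rule norm_diff_scaleR_square)
  moreover have "inner a (x - y) = P - \<beta> * R"
    unfolding a_eq P_def R_def by (simp add: inner_diff_left power2_norm_eq_inner)
  ultimately have "Q - 2 * \<beta> * P + \<beta>\<^sup>2 * R \<le> (L - \<beta>) * (P - \<beta> * R)"
    using bound by simp
  then show ?thesis
    unfolding P_def [symmetric] Q_def [symmetric] R_def [symmetric]
    by (simp add: algebra_simps power2_eq_square)
qed

lemma gradient_step_rate_le_1:
  fixes L \<beta> \<alpha> :: real
  assumes "\<beta> \<le> L" and "0 < \<beta>" and "0 < \<alpha>" and "\<alpha> \<le> 2 / (L + \<beta>)"
  shows "\<beta> * L / (L + \<beta>) * \<alpha> \<le> 1"
proof -
  have "0 < L + \<beta>" and "0 \<le> \<beta> * L"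
    using assms by simp_all
  have "\<beta> * L / (L + \<beta>) * \<alpha> \<le> \<beta> * L / (L + \<beta>) * (2 / (L + \<beta>))"
    using assms \<open>0 < L + \<beta>\<close> by (intro mult_left_mono) simp_all
  also have "\<dots> = 2 * \<beta> * L / (L + \<beta>)\<^sup>2"
    by (simp add: power2_eq_square)
  also have "\<dots> \<le> 1"
  proof -
    have "2 * \<beta> * L \<le> (L - \<beta>)\<^sup>2 + 4 * (\<beta> * L)"
      using \<open>0 \<le> \<beta> * L\<close> zero_le_power2[of "L - \<beta>"] by linarith
    also have "\<dots> = (L + \<beta>)\<^sup>2"
      by (simp add: power2_eq_square algebra_simps)
    finally show ?thesis
      by (simp only: divide_le_eq_1_pos[OF zero_less_power[OF \<open>0 < L + \<beta>\<close>]])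
  qed
  finally show ?thesis .
qed

lemma gradient_step_contraction:
  fixes F :: "'a::real_inner \<Rightarrow> real"
  assumes deriv: "\<And>x. GDERIV F x :> G x" and sc: "strongly_convex_with \<beta> F"
    and lip: "L-lipschitz_on UNIV G" and "\<beta> \<le> L" and "0 < \<beta>"
    and "0 < \<alpha>" and "\<alpha> \<le> 2 / (L + \<beta>)"
  shows "norm (x - y - \<alpha> *\<^sub>R (G x - G y)) \<le> (1 - \<beta> * L / (L + \<beta>) * \<alpha>) * norm (x - y)"
proof -
  define P where "P = inner (G x - G y) (x - y)"
  define Q where "Q = (norm (G x - G y))\<^sup>2"
  define R where "R = (norm (x - y))\<^sup>2"
  define K where "K = L + \<beta>"
  define r where "r = \<beta> * L / K * \<alpha>"
  have "0 < K"
    using \<open>\<beta> \<le> L\<close> \<open>0 < \<beta>\<close> by (simp add: K_def)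
  have "(norm (x - y - \<alpha> *\<^sub>R (G x - G y)))\<^sup>2 = R - 2 * \<alpha> * P + \<alpha>\<^sup>2 * Q"
    unfolding norm_diff_scaleR_square P_def Q_def R_def by (simp add: inner_commute)
  also have "\<dots> \<le> R - 2 * \<alpha> * ((Q + L * \<beta> * R) / K) + \<alpha>\<^sup>2 * Q"
  proof -
    have "Q + L * \<beta> * R \<le> K * P"
      unfolding P_def Q_def R_def K_def
      by (rule strongly_convex_gradient_cocoercive[OF deriv sc lip \<open>\<beta> \<le> L\<close>])
    then have "(Q + L * \<beta> * R) / K \<le> P"
      using \<open>0 < K\<close> by (simp add: pos_divide_le_eq mult.commute)
    then have "2 * \<alpha> * ((Q + L * \<beta> * R) / K) \<le> 2 * \<alpha> * P"
      using \<open>0 < \<alpha>\<close> by (intro mult_left_mono) simp_all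
    then show ?thesis
      by linarith
  qed
  also have "\<dots> = (1 - 2 * r) * R + \<alpha> * (\<alpha> - 2 / K) * Q"
    using \<open>0 < K\<close> by (simp add: r_def field_simps power2_eq_square)
  also have "\<dots> \<le> (1 - 2 * r) * R"
    using \<open>0 < \<alpha>\<close> \<open>\<alpha> \<le> 2 / (L + \<beta>)\<close> by (simp add: K_def Q_def mult_nonneg_nonpos mult_nonpos_nonneg)
  also have "\<dots> \<le> (1 - r)\<^sup>2 * R"
    using zero_le_power2[of r] by (intro mult_right_mono) (auto simp: R_def power2_eq_square algebra_simps)
  finally have "(norm (x - y - \<alpha> *\<^sub>R (G x - G y)))\<^sup>2 \<le> ((1 - r) * norm (x - y))\<^sup>2"
    by (simp add: R_def power_mult_distrib)
  moreover have "r \<le> 1"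
    unfolding r_def K_def using assms(4-7) by (rule gradient_step_rate_le_1)
  ultimately show ?thesis
    unfolding r_def K_def using power2_le_imp_le by simp
qed

lemma strong_convexity_le_lipschitz:
  fixes F :: "'a::euclidean_space \<Rightarrow> real"
  assumes deriv: "\<And>x. GDERIV F x :> G x" and sc: "strongly_convex_with \<beta> F"
    and lip: "L-lipschitz_on UNIV G"
  shows "\<beta> \<le> L"
proof -
  obtain b :: 'a where "b \<in> Basis"
    using nonempty_Basis by blast
  then have "norm b = 1"
    by simp
  then show ?thesis
    using strongly_convex_with_gradient_lower_bound[OF deriv sc, of 0 b]
      lipschitz_gradient_upper_bound[OF deriv lip, of b 0]
    by simp
qed

lemma GDERIV_eq_0_at_minimum:
  assumes "GDERIV F w :> D" and "\<And>x. F w \<le> F x"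
  shows "D = 0"
proof -
  have "(\<lambda>h. inner h D) = (\<lambda>h. 0)"
    using assms by (intro has_derivative_local_min[of F _ w]) (simp_all add: gderiv_def)
  then have "inner D D = 0"
    by meson
  then show ?thesis
    by simp
qed

lemma gradient_step_contraction_to_minimizer:
  fixes F :: "'a::euclidean_space \<Rightarrow> real"
  assumes deriv: "\<And>x. GDERIV F x :> G x" and sc: "strongly_convex_with \<beta> F"
    and lip: "L-lipschitz_on UNIV G" and "0 < \<beta>" and "0 < \<alpha>" and "\<alpha> \<le> 2 / (L + \<beta>)"
    and min: "\<And>x. F w \<le> F x"
  shows "norm (x - w - \<alpha> *\<^sub>R G x) \<le> (1 - \<beta> * L / (L + \<beta>) * \<alpha>) * norm (x - w)"
  using gradient_step_contraction[OF deriv sc lip strong_convexity_le_lipschitz[OF deriv sc lip] assms(4-6),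
      where x = x and y = w]
    GDERIV_eq_0_at_minimum[OF deriv min]
  by simp

lemma GDERIV_scaled_sum:
  assumes "\<And>i. i \<in> I \<Longrightarrow> GDERIV (f i) x :> D i"
  shows "GDERIV (\<lambda>x. c * (\<Sum>i\<in>I. f i x)) x :> c *\<^sub>R (\<Sum>i\<in>I. D i)"
  using assms unfolding gderiv_def
  by (auto intro!: derivative_eq_intros simp: inner_sum_right)

lemma lipschitz_on_average:
  fixes g :: "nat \<Rightarrow> 'a::metric_space \<Rightarrow> 'b::real_normed_vector"
  assumes "1 \<le> n" and lip: "\<And>i. i \<in> {1..n} \<Longrightarrow> L-lipschitz_on U (g i)"
  shows "L-lipschitz_on U (\<lambda>x. (1 / real n) *\<^sub>R (\<Sum>i=1..n. g i x))"
proof (rule lipschitz_onI)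
  show "0 \<le> L"
    using lip[of 1] \<open>1 \<le> n\<close> lipschitz_on_nonneg by simp
  fix x y assume "x \<in> U" "y \<in> U"
  have "dist ((1 / real n) *\<^sub>R (\<Sum>i=1..n. g i x)) ((1 / real n) *\<^sub>R (\<Sum>i=1..n. g i y))
      = (1 / real n) * norm (\<Sum>i=1..n. g i x - g i y)"
    by (simp add: dist_norm sum_subtractf flip: scaleR_diff_right)
  also have "\<dots> \<le> (1 / real n) * (\<Sum>i=1..n. L * dist x y)"
    using lipschitz_onD[OF lip \<open>x \<in> U\<close> \<open>y \<in> U\<close>]
    by (intro mult_left_mono order_trans[OF norm_sum] sum_mono) (simp_all add: dist_norm)
  also have "\<dots> = L * dist x y"
    using \<open>1 \<le> n\<close> by simp
  finally show "dist ((1 / real n) *\<^sub>R (\<Sum>i=1..n. g i x)) ((1 / real n) *\<^sub>R (\<Sum>i=1..n. g i y))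
      \<le> L * dist x y" .
qed

section \<open>Weighted norms\<close>

locale prob_vector =
  fixes n :: nat and p :: "nat \<Rightarrow> real"
  assumes p_pos: "\<And>i. i \<in> {1..n} \<Longrightarrow> 0 < p i"
    and p_sum: "(\<Sum>i=1..n. p i) = 1"
begin

lemma p_le_1: "i \<in> {1..n} \<Longrightarrow> p i \<le> 1"
  using member_le_sum[of i "{1..n}" p] p_pos p_sum by (simp add: less_imp_le)

lemma weighted_sum_squares_nonneg: "0 \<le> (\<Sum>i=1..n. (x i)\<^sup>2 / p i)"
  by (intro sum_nonneg divide_nonneg_pos zero_le_power2 p_pos)

lemma pinorm_nonneg: "0 \<le> pinorm n p x"
  using weighted_sum_squares_nonneg by (simp add: pinorm_def)

lemma pinorm_cong: "(\<And>i. i \<in> {1..n} \<Longrightarrow> x i = x' i) \<Longrightarrow> pinorm n p x = pinorm n p x'"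
  unfolding pinorm_def by (intro arg_cong[where f = sqrt] sum.cong) auto

lemma pinorm_scale: "pinorm n p (\<lambda>i. c * x i) = \<bar>c\<bar> * pinorm n p x"
proof -
  have "(\<Sum>i=1..n. (c * x i)\<^sup>2 / p i) = c\<^sup>2 * (\<Sum>i=1..n. (x i)\<^sup>2 / p i)"
    by (simp add: sum_distrib_left power_mult_distrib)
  then show ?thesis
    by (simp add: pinorm_def real_sqrt_mult)
qed

lemma square_le_pinorm: "i \<in> {1..n} \<Longrightarrow> (x i)\<^sup>2 \<le> p i * (pinorm n p x)\<^sup>2"
proof -
  assume i: "i \<in> {1..n}"
  have "(x i)\<^sup>2 / p i \<le> (\<Sum>j=1..n. (x j)\<^sup>2 / p j)"
    using i by (intro member_le_sum divide_nonneg_pos zero_le_power2 p_pos) auto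
  also have "\<dots> = (pinorm n p x)\<^sup>2"
    unfolding pinorm_def using weighted_sum_squares_nonneg by simp
  finally show ?thesis
    using p_pos[OF i] by (simp add: field_simps)
qed

lemma bdd_above_pi_opnorm_set: "bdd_above {pinorm n p (matvec n M x) | x. pinorm n p x \<le> 1}"
proof (rule bdd_aboveI, safe)
  fix x assume x: "pinorm n p x \<le> 1"
  have "\<bar>x j\<bar> \<le> 1" if j: "j \<in> {1..n}" for j
  proof -
    have "(x j)\<^sup>2 \<le> p j * (pinorm n p x)\<^sup>2"
      by (rule square_le_pinorm[OF j])
    also have "\<dots> \<le> 1"
      using p_le_1[OF j] p_pos[OF j] x pinorm_nonneg[of x]
      by (intro mult_le_one) (auto simp: power_le_one)
    finally show ?thesis
      by (simp add: abs_square_le_1)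
  qed
  then have "\<bar>matvec n M x i\<bar> \<le> (\<Sum>j=1..n. \<bar>M i j\<bar>)" for i
    unfolding matvec_def
    by (intro order_trans[OF sum_abs] sum_mono) (auto simp: abs_mult intro: mult_left_le)
  then have "(matvec n M x i)\<^sup>2 \<le> (\<Sum>j=1..n. \<bar>M i j\<bar>)\<^sup>2" for i
    by (metis abs_le_square_iff abs_sum_abs)
  then show "pinorm n p (matvec n M x) \<le> pinorm n p (\<lambda>i. \<Sum>j=1..n. \<bar>M i j\<bar>)"
    unfolding pinorm_def
    by (intro real_sqrt_le_mono sum_mono divide_right_mono) (auto simp: less_imp_le p_pos)
qed

lemma pinorm_matvec_le: "pinorm n p (matvec n M x) \<le> pi_opnorm n p M * pinorm n p x"
proof (cases "pinorm n p x = 0")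
  case True
  then have "x i = 0" if "i \<in> {1..n}" for i
    using square_le_pinorm[OF that, of x] by simp
  then have "pinorm n p (matvec n M x) = pinorm n p (\<lambda>_. 0)"
    unfolding matvec_def by (intro pinorm_cong) simp
  then show ?thesis
    using True by (simp add: pinorm_def)
next
  case False
  define r where "r = pinorm n p x"
  have "0 < r"
    using False pinorm_nonneg[of x] by (simp add: r_def)
  have "pinorm n p (\<lambda>i. (1 / r) * x i) = 1"
    unfolding pinorm_scale using \<open>0 < r\<close> by (simp add: r_def)
  then have "pinorm n p (matvec n M (\<lambda>i. (1 / r) * x i)) \<le> pi_opnorm n p M"
    unfolding pi_opnorm_def by (intro cSup_upper bdd_above_pi_opnorm_set) auto
  moreover have "matvec n M (\<lambda>i. (1 / r) * x i) = (\<lambda>i. (1 / r) * matvec n M x i)"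
    by (simp add: matvec_def sum_distrib_left algebra_simps)
  ultimately have "(1 / r) * pinorm n p (matvec n M x) \<le> pi_opnorm n p M"
    using \<open>0 < r\<close> by (simp only: pinorm_scale) simp
  then show ?thesis
    using \<open>0 < r\<close> by (simp add: r_def field_simps)
qed

lemma pi_opnorm_nonneg: "0 \<le> pi_opnorm n p M"
proof -
  have "pinorm n p (\<lambda>_. 0) \<le> 1"
    by (simp add: pinorm_def)
  then have "pinorm n p (matvec n M (\<lambda>_. 0)) \<le> pi_opnorm n p M"
    unfolding pi_opnorm_def by (intro cSup_upper bdd_above_pi_opnorm_set) auto
  then show ?thesis
    by (simp add: matvec_def pinorm_def)
qed

lemma square_sum_le_weighted: "(\<Sum>j=1..n. a j)\<^sup>2 \<le> (\<Sum>j=1..n. (a j)\<^sup>2 / p j)"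
proof -
  have "(\<Sum>j=1..n. a j) = (\<Sum>j=1..n. a j / sqrt (p j) * sqrt (p j))"
  proof (intro sum.cong refl)
    fix j assume "j \<in> {1..n}"
    then show "a j = a j / sqrt (p j) * sqrt (p j)"
      using p_pos[of j] by simp
  qed
  then have "(\<Sum>j=1..n. a j)\<^sup>2 \<le> (\<Sum>j=1..n. (a j / sqrt (p j))\<^sup>2) * (\<Sum>j=1..n. (sqrt (p j))\<^sup>2)"
    by (simp only: Cauchy_Schwarz_ineq_sum)
  also have "\<dots> = (\<Sum>j=1..n. (a j)\<^sup>2 / p j)"
    using p_pos p_sum by (simp add: power_divide less_imp_le)
  finally show ?thesis .
qed

lemma sum_abs_le_pinorm: "(\<Sum>j=1..n. \<bar>v j\<bar>) \<le> pinorm n p v"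
  unfolding pinorm_def using square_sum_le_weighted[of "\<lambda>j. \<bar>v j\<bar>"] by (simp add: real_le_rsqrt)

lemma sum_norm_le_pinorm_blk: "(\<Sum>j=1..n. norm (v j)) \<le> pinorm_blk n p v"
  unfolding pinorm_blk_def using square_sum_le_weighted[of "\<lambda>j. norm (v j)"] by (simp add: real_le_rsqrt)

end

section \<open>Push-sum weights\<close>

locale push_sum_graph =
  fixes n :: nat and E :: "(nat \<times> nat) set"
  assumes n_pos: "1 \<le> n"
    and E_sub: "E \<subseteq> {1..n} \<times> {1..n}"
    and self_loops: "\<And>i. i \<in> {1..n} \<Longrightarrow> (i, i) \<in> E"
    and strong_conn: "strongly_connected_on n E"
begin

lemma out_neighbours_subset: "{i. (j, i) \<in> E} \<subseteq> {1..n}"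
  using E_sub by auto

lemma outdeg_pos: "j \<in> {1..n} \<Longrightarrow> 0 < outdeg E j"
  unfolding outdeg_def
  using self_loops finite_subset[OF out_neighbours_subset] by (auto simp: card_gt_0_iff)

lemma outdeg_le: "outdeg E j \<le> n"
  unfolding outdeg_def using card_mono[OF _ out_neighbours_subset] by fastforce

lemma Wmat_nonneg: "0 \<le> Wmat E i j"
  by (simp add: Wmat_def)

lemma Wmat_ge_if_edge: "(j, i) \<in> E \<Longrightarrow> 1 / real n \<le> Wmat E i j"
  using E_sub outdeg_pos[of j] outdeg_le[of j] by (auto simp: Wmat_def frac_le)

lemma sum_Wmat_column: "j \<in> {1..n} \<Longrightarrow> (\<Sum>i=1..n. Wmat E i j) = 1"
proof -
  assume j: "j \<in> {1..n}"
  have "(\<Sum>i=1..n. Wmat E i j) = (\<Sum>i\<in>{1..n} \<inter> {i. (j, i) \<in> E}. 1 / real (outdeg E j))"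
    by (simp add: Wmat_def sum.If_cases)
  also have "{1..n} \<inter> {i. (j, i) \<in> E} = {i. (j, i) \<in> E}"
    using out_neighbours_subset by blast
  finally show ?thesis
    using outdeg_pos[OF j] by (simp add: outdeg_def)
qed

lemma sum_Wmat_scaleR:
  fixes x :: "nat \<Rightarrow> 'a::real_vector"
  shows "(\<Sum>i=1..n. \<Sum>j=1..n. Wmat E i j *\<^sub>R x j) = (\<Sum>j=1..n. x j)"
proof -
  have "(\<Sum>i=1..n. \<Sum>j=1..n. Wmat E i j *\<^sub>R x j) = (\<Sum>j=1..n. \<Sum>i=1..n. Wmat E i j *\<^sub>R x j)"
    by (rule sum.swap)
  also have "\<dots> = (\<Sum>j=1..n. (\<Sum>i=1..n. Wmat E i j) *\<^sub>R x j)"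
    by (simp add: scaleR_sum_left)
  also have "\<dots> = (\<Sum>j=1..n. x j)"
    by (intro sum.cong refl) (metis sum_Wmat_column scaleR_one)
  finally show ?thesis .
qed

lemma yseq_nonneg: "0 \<le> yseq n E t i"
  by (induction t arbitrary: i) (auto intro!: sum_nonneg simp: Wmat_nonneg)

lemma sum_yseq: "(\<Sum>i=1..n. yseq n E t i) = real n"
  by (induction t) (use sum_Wmat_scaleR[of "yseq n E _"] in simp_all)

lemma yseq_Suc_ge_edge: "(j, i) \<in> E \<Longrightarrow> yseq n E t j / real n \<le> yseq n E (Suc t) i"
proof -
  assume e: "(j, i) \<in> E"
  then have "j \<in> {1..n}"
    using E_sub by auto
  have "yseq n E t j / real n \<le> Wmat E i j * yseq n E t j"
    using mult_right_mono[OF Wmat_ge_if_edge[OF e] yseq_nonneg] by simp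
  also have "\<dots> \<le> (\<Sum>j=1..n. Wmat E i j * yseq n E t j)"
    using \<open>j \<in> {1..n}\<close> by (intro member_le_sum) (simp_all add: Wmat_nonneg yseq_nonneg)
  finally show ?thesis
    by simp
qed

lemma yseq_ge_shift: "i \<in> {1..n} \<Longrightarrow> yseq n E t i / real n ^ s \<le> yseq n E (t + s) i"
proof (induction s)
  case (Suc s)
  then have "yseq n E t i / real n ^ Suc s \<le> yseq n E (t + s) i / real n"
    using n_pos by (simp add: divide_right_mono field_simps)
  also have "\<dots> \<le> yseq n E (t + Suc s) i"
    using yseq_Suc_ge_edge[OF self_loops[OF Suc.prems]] by simp
  finally show ?case .
qed simp

lemma yseq_ge_path: "(j, i) \<in> E\<^sup>* \<Longrightarrow> \<exists>k. \<forall>t. yseq n E t j / real n ^ k \<le> yseq n E (t + k) i"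
proof (induction rule: rtrancl_induct)
  case base
  show ?case
    by (intro exI[of _ 0]) simp
next
  case (step m i)
  then obtain k where k: "\<And>t. yseq n E t j / real n ^ k \<le> yseq n E (t + k) m"
    by blast
  have "yseq n E t j / real n ^ Suc k \<le> yseq n E (t + Suc k) i" for t
  proof -
    have "yseq n E t j / real n ^ Suc k \<le> yseq n E (t + k) m / real n"
      using k[of t] n_pos by (simp add: divide_right_mono field_simps)
    also have "\<dots> \<le> yseq n E (t + Suc k) i"
      using yseq_Suc_ge_edge[OF step(2)] by simp
    finally show ?thesis .
  qed
  then show ?case
    by blast
qed

lemma eventually_yseq_ge:
  assumes "i \<in> {1..n}" and "j \<in> {1..n}"
  shows "eventually (\<lambda>k. \<forall>t. yseq n E t j / real n ^ k \<le> yseq n E (t + k) i) sequentially"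
proof -
  have "(j, i) \<in> E\<^sup>*"
    using strong_conn assms by (simp add: strongly_connected_on_def)
  then obtain k where k: "\<And>t. yseq n E t j / real n ^ k \<le> yseq n E (t + k) i"
    using yseq_ge_path by blast
  show ?thesis
  proof (rule eventually_sequentiallyI[of k], safe)
    fix k' t assume "k \<le> k'"
    have "yseq n E t j / real n ^ k' = (yseq n E t j / real n ^ k) / real n ^ (k' - k)"
      using \<open>k \<le> k'\<close> n_pos by (simp add: power_add[symmetric])
    also have "\<dots> \<le> yseq n E (t + k) i / real n ^ (k' - k)"
      by (intro divide_right_mono k) simp
    also have "\<dots> \<le> yseq n E (t + k + (k' - k)) i"
      by (rule yseq_ge_shift[OF assms(1)])
    finally show "yseq n E t j / real n ^ k' \<le> yseq n E (t + k') i"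
      using \<open>k \<le> k'\<close> by simp
  qed
qed

lemma yseq_lower_bound: "\<exists>c>0. \<forall>t. \<forall>i\<in>{1..n}. c \<le> yseq n E t i"
proof -
  have "eventually (\<lambda>k. \<forall>(j, i)\<in>{1..n} \<times> {1..n}. \<forall>t. yseq n E t j / real n ^ k \<le> yseq n E (t + k) i)
      sequentially"
    by (intro eventually_ball_finite) (auto intro: eventually_yseq_ge)
  then obtain K where K: "\<And>i j t. i \<in> {1..n} \<Longrightarrow> j \<in> {1..n} \<Longrightarrow>
      yseq n E t j / real n ^ K \<le> yseq n E (t + K) i"
    unfolding eventually_sequentially by blast
  have "1 / real n ^ K \<le> yseq n E t i" if i: "i \<in> {1..n}" for t i
  proof (cases "t < K")
    case True
    have "1 / real n ^ K \<le> yseq n E 0 i / real n ^ t"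
      using True n_pos by (simp add: frac_le power_increasing)
    also have "\<dots> \<le> yseq n E t i"
      using yseq_ge_shift[OF i, of 0 t] by simp
    finally show ?thesis .
  next
    case False
    then obtain t0 where t0: "t = t0 + K"
      using le_Suc_ex not_less by (metis add.commute)
    have "\<exists>j\<in>{1..n}. 1 \<le> yseq n E t0 j"
    proof (rule ccontr)
      assume "\<not> ?thesis"
      then have "(\<Sum>j=1..n. yseq n E t0 j) < (\<Sum>j=1..n. 1)"
        using n_pos by (intro sum_strict_mono) (auto simp: not_le)
      then show False
        using sum_yseq[of t0] by simp
    qed
    then obtain j where j: "j \<in> {1..n}" "1 \<le> yseq n E t0 j"
      by blast
    have "1 / real n ^ K \<le> yseq n E t0 j / real n ^ K"
      using j n_pos by (simp add: divide_right_mono)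
    also have "\<dots> \<le> yseq n E t i"
      unfolding t0 by (rule K[OF i j(1)])
    finally show ?thesis .
  qed
  moreover have "0 < 1 / real n ^ K"
    using n_pos by simp
  ultimately show ?thesis
    by blast
qed

lemma yseq_pos: "j \<in> {1..n} \<Longrightarrow> 0 < yseq n E t j"
  using yseq_lower_bound by (meson less_le_trans)

lemma inverse_yseq_le_deltaY: "j \<in> {1..n} \<Longrightarrow> 1 / yseq n E t j \<le> deltaY n E"
proof -
  assume j: "j \<in> {1..n}"
  obtain c where "0 < c" and c: "\<And>t i. i \<in> {1..n} \<Longrightarrow> c \<le> yseq n E t i"
    using yseq_lower_bound by blast
  have "Max ((\<lambda>i. 1 / yseq n E t i) ` {1..n}) \<le> 1 / c" for t
    using n_pos c \<open>0 < c\<close> by (auto simp: frac_le)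
  then have "bdd_above (range (\<lambda>t. Max ((\<lambda>i. 1 / yseq n E t i) ` {1..n})))"
    by (intro bdd_aboveI2)
  moreover have "1 / yseq n E t j \<le> Max ((\<lambda>i. 1 / yseq n E t i) ` {1..n})"
    using j by (intro Max_ge) auto
  ultimately show ?thesis
    unfolding deltaY_def by (meson UNIV_I cSUP_upper order_trans)
qed

lemma deltaY_nonneg: "0 \<le> deltaY n E"
proof -
  have "1 \<in> {1..n}"
    using n_pos by simp
  then have "0 < 1 / yseq n E 0 1"
    by (simp add: yseq_pos)
  also have "\<dots> \<le> deltaY n E"
    by (rule inverse_yseq_le_deltaY[OF \<open>1 \<in> {1..n}\<close>])
  finally show ?thesis
    by simp
qed

lemma norm_sub_push_sum_ratio_le:
  fixes x v :: "'a::real_normed_vector"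
  assumes j: "j \<in> {1..n}"
  shows "norm (x - (1 / yseq n E t j) *\<^sub>R v) \<le> deltaY n E * (\<bar>yseq n E t j - c\<bar> * norm x + norm (c *\<^sub>R x - v))"
proof -
  have "0 < yseq n E t j"
    by (rule yseq_pos[OF j])
  then have "x - (1 / yseq n E t j) *\<^sub>R v = (1 / yseq n E t j) *\<^sub>R (yseq n E t j *\<^sub>R x - v)"
    by (simp add: scaleR_diff_right)
  then have "norm (x - (1 / yseq n E t j) *\<^sub>R v) = (1 / yseq n E t j) * norm (yseq n E t j *\<^sub>R x - v)"
    using \<open>0 < yseq n E t j\<close> by simp
  also have "\<dots> \<le> deltaY n E * norm (yseq n E t j *\<^sub>R x - v)"
    using inverse_yseq_le_deltaY[OF j] by (intro mult_right_mono) simp_all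
  also have "yseq n E t j *\<^sub>R x - v = (yseq n E t j - c) *\<^sub>R x + (c *\<^sub>R x - v)"
    by (simp add: algebra_simps)
  also have "norm \<dots> \<le> \<bar>yseq n E t j - c\<bar> * norm x + norm (c *\<^sub>R x - v)"
    by (metis norm_scaleR norm_triangle_ineq)
  finally show ?thesis
    using deltaY_nonneg by (simp add: mult_left_mono)
qed

lemma wbar_wseq_Suc:
  "wbar n (wseq n E \<alpha> g w0 (Suc t)) = wbar n (wseq n E \<alpha> g w0 t)
     - (\<alpha> / real n) *\<^sub>R (\<Sum>j=1..n. g j ((1 / yseq n E t j) *\<^sub>R wseq n E \<alpha> g w0 t j))"
proof -
  let ?w = "wseq n E \<alpha> g w0 t"
  let ?x = "\<lambda>j. ?w j - \<alpha> *\<^sub>R g j ((1 / yseq n E t j) *\<^sub>R ?w j)"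
  have "(\<Sum>i=1..n. wseq n E \<alpha> g w0 (Suc t) i) = (\<Sum>j=1..n. ?x j)"
    using sum_Wmat_scaleR[of ?x] by simp
  then show ?thesis
    by (simp add: wbar_def sum_subtractf scaleR_sum_right[symmetric] scaleR_diff_right)
qed

end

section \<open>The network average\<close>

locale push_sum_net = push_sum_graph n E + prob_vector n p
  for n :: nat and E :: "(nat \<times> nat) set" and p :: "nat \<Rightarrow> real" +
  assumes p_stationary: "\<And>i. i \<in> {1..n} \<Longrightarrow> (\<Sum>j=1..n. Wmat E i j * p j) = p i"
begin

lemma pinorm_yseq_deviation_le:
  "pinorm n p (\<lambda>i. yseq n E t i - real n * p i) \<le> sigmaW n E p ^ t * pinorm n p (\<lambda>i. 1 - real n * p i)"
proof (induction t)
  case (Suc t)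
  define v where "v = (\<lambda>i. yseq n E t i - real n * p i)"
  have "(\<Sum>j=1..n. v j) = 0"
    using sum_yseq[of t] p_sum by (simp add: v_def sum_subtractf sum_distrib_left[symmetric])
  \<comment> \<open>as \<open>v\<close> sums to \<open>0\<close>, subtracting \<open>W\<^sup>\<infinity> = p 1\<^sup>T\<close> from \<open>W\<close> does not change \<open>W v\<close>\<close>
  have "matvec n (\<lambda>i j. Wmat E i j - p i) v i = yseq n E (Suc t) i - real n * p i"
    if "i \<in> {1..n}" for i
  proof -
    have "matvec n (\<lambda>i j. Wmat E i j - p i) v i = (\<Sum>j=1..n. Wmat E i j * v j) - p i * (\<Sum>j=1..n. v j)"
      by (simp add: matvec_def algebra_simps sum_subtractf sum_distrib_left)
    also have "\<dots> = (\<Sum>j=1..n. Wmat E i j * yseq n E t j) - real n * (\<Sum>j=1..n. Wmat E i j * p j)"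
      using \<open>(\<Sum>j=1..n. v j) = 0\<close> by (simp add: v_def algebra_simps sum_subtractf sum_distrib_left)
    finally show ?thesis
      using p_stationary[OF that] by simp
  qed
  then have "pinorm n p (\<lambda>i. yseq n E (Suc t) i - real n * p i)
      = pinorm n p (matvec n (\<lambda>i j. Wmat E i j - p i) v)"
    by (intro pinorm_cong) simp
  also have "\<dots> \<le> sigmaW n E p * pinorm n p v"
    unfolding sigmaW_def by (rule pinorm_matvec_le)
  also have "\<dots> \<le> sigmaW n E p * (sigmaW n E p ^ t * pinorm n p (\<lambda>i. 1 - real n * p i))"
    using Suc.IH pi_opnorm_nonneg by (intro mult_left_mono) (simp_all add: v_def sigmaW_def)
  finally show ?case
    by simp
qed simp

lemma gradient_disagreement_le:
  fixes g :: "nat \<Rightarrow> 'a::real_normed_vector \<Rightarrow> 'a"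
  assumes lip: "\<And>j. j \<in> {1..n} \<Longrightarrow> L-lipschitz_on UNIV (g j)"
  shows "norm (\<Sum>j=1..n. g j x - g j ((1 / yseq n E t j) *\<^sub>R v j))
    \<le> L * deltaY n E * (norm x * (pinorm n p (\<lambda>i. 1 - real n * p i) * sigmaW n E p ^ t)
        + pinorm_blk n p (\<lambda>j. (real n * p j) *\<^sub>R x - v j))"
proof -
  have "0 \<le> L"
    using lip[of 1] n_pos lipschitz_on_nonneg by simp
  have "norm (g j x - g j ((1 / yseq n E t j) *\<^sub>R v j))
      \<le> L * deltaY n E * (\<bar>yseq n E t j - real n * p j\<bar> * norm x + norm ((real n * p j) *\<^sub>R x - v j))"
    if j: "j \<in> {1..n}" for j
  proof -
    have "norm (g j x - g j ((1 / yseq n E t j) *\<^sub>R v j)) \<le> L * norm (x - (1 / yseq n E t j) *\<^sub>R v j)"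
      by (rule lipschitz_on_normD[OF lip[OF j]]) simp_all
    also have "\<dots> \<le> L * (deltaY n E * (\<bar>yseq n E t j - real n * p j\<bar> * norm x
        + norm ((real n * p j) *\<^sub>R x - v j)))"
      using \<open>0 \<le> L\<close> by (intro mult_left_mono norm_sub_push_sum_ratio_le[OF j])
    finally show ?thesis
      by (simp add: mult.assoc)
  qed
  then have "norm (\<Sum>j=1..n. g j x - g j ((1 / yseq n E t j) *\<^sub>R v j))
      \<le> (\<Sum>j=1..n. L * deltaY n E * (\<bar>yseq n E t j - real n * p j\<bar> * norm x + norm ((real n * p j) *\<^sub>R x - v j)))"
    by (intro order_trans[OF norm_sum] sum_mono) simp
  also have "\<dots> = L * deltaY n E * (norm x * (\<Sum>j=1..n. \<bar>yseq n E t j - real n * p j\<bar>)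
      + (\<Sum>j=1..n. norm ((real n * p j) *\<^sub>R x - v j)))"
    by (simp add: sum_distrib_left sum_distrib_right sum.distrib algebra_simps)
  also have "\<dots> \<le> L * deltaY n E * (norm x * (pinorm n p (\<lambda>i. 1 - real n * p i) * sigmaW n E p ^ t)
      + pinorm_blk n p (\<lambda>j. (real n * p j) *\<^sub>R x - v j))"
    using \<open>0 \<le> L\<close> deltaY_nonneg sum_norm_le_pinorm_blk
      order_trans[OF sum_abs_le_pinorm pinorm_yseq_deviation_le]
    by (intro mult_left_mono add_mono) (simp_all add: mult.commute)
  finally show ?thesis .
qed

lemma wbar_error_recursion:
  fixes g :: "nat \<Rightarrow> 'a::real_normed_vector \<Rightarrow> 'a" and \<alpha> :: real and w0 :: "nat \<Rightarrow> 'a"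
  defines "w \<equiv> wseq n E \<alpha> g w0"
  assumes lip: "\<And>j. j \<in> {1..n} \<Longrightarrow> L-lipschitz_on UNIV (g j)"
    and contraction: "norm (wbar n (w t) - ws - \<alpha> *\<^sub>R ((1 / real n) *\<^sub>R (\<Sum>j=1..n. g j (wbar n (w t)))))
      \<le> \<rho> * norm (wbar n (w t) - ws)"
    and "0 < \<alpha>"
  shows "norm (wbar n (w (Suc t)) - ws)
    \<le> (\<rho> + \<alpha> * L * deltaY n E / real n * pinorm n p (\<lambda>i. 1 - real n * p i) * sigmaW n E p ^ t)
        * norm (wbar n (w t) - ws)
      + \<alpha> * L * deltaY n E / real n * pinorm_blk n p (\<lambda>i. (real n * p i) *\<^sub>R wbar n (w t) - w t i)
      + \<alpha> * L * deltaY n E / real n * pinorm n p (\<lambda>i. 1 - real n * p i) * sigmaW n E p ^ t * norm ws"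
proof -
  define x where "x = wbar n (w t)"
  define S where "S = (\<Sum>j=1..n. g j x - g j ((1 / yseq n E t j) *\<^sub>R w t j))"
  define D where "D = pinorm n p (\<lambda>i. 1 - real n * p i) * sigmaW n E p ^ t"
  define N where "N = pinorm_blk n p (\<lambda>i. (real n * p i) *\<^sub>R x - w t i)"
  have "0 \<le> L * deltaY n E"
    using lipschitz_on_nonneg[OF lip[of 1]] n_pos deltaY_nonneg by simp
  have "0 \<le> D"
    using pinorm_nonneg pi_opnorm_nonneg by (simp add: D_def sigmaW_def)
  have "wbar n (w (Suc t)) - ws = (x - ws - \<alpha> *\<^sub>R ((1 / real n) *\<^sub>R (\<Sum>j=1..n. g j x))) + (\<alpha> / real n) *\<^sub>R S"
    unfolding w_def wbar_wseq_Suc by (simp add: x_def S_def w_def sum_subtractf algebra_simps)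
  then have "norm (wbar n (w (Suc t)) - ws)
      \<le> norm (x - ws - \<alpha> *\<^sub>R ((1 / real n) *\<^sub>R (\<Sum>j=1..n. g j x))) + norm ((\<alpha> / real n) *\<^sub>R S)"
    by (simp only: norm_triangle_ineq)
  also have "\<dots> \<le> \<rho> * norm (x - ws) + \<alpha> / real n * norm S"
    using contraction \<open>0 < \<alpha>\<close> by (simp add: x_def)
  finally have "norm (wbar n (w (Suc t)) - ws) \<le> \<rho> * norm (x - ws) + \<alpha> / real n * norm S" .
  moreover have "\<alpha> / real n * norm S \<le> \<alpha> / real n * (L * deltaY n E * ((norm (x - ws) + norm ws) * D + N))"
  proof -
    have "norm S \<le> L * deltaY n E * (norm x * D + N)"
      unfolding S_def D_def N_def by (rule gradient_disagreement_le[OF lip])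
    also have "\<dots> \<le> L * deltaY n E * ((norm (x - ws) + norm ws) * D + N)"
      using \<open>0 \<le> L * deltaY n E\<close> \<open>0 \<le> D\<close> norm_triangle_sub[of x ws]
      by (intro mult_left_mono add_right_mono mult_right_mono) (simp_all add: add.commute)
    finally show ?thesis
      using \<open>0 < \<alpha>\<close> by (intro mult_left_mono) simp_all
  qed
  ultimately show ?thesis
    by (simp add: x_def D_def N_def algebra_simps)
qed

end

theorem proposition6p2:
  fixes n :: nat and E :: "(nat \<times> nat) set" and p :: "nat \<Rightarrow> real"
    and f :: "nat \<Rightarrow> 'a::euclidean_space \<Rightarrow> real" and g :: "nat \<Rightarrow> 'a \<Rightarrow> 'a"
    and Ls :: "nat \<Rightarrow> real" and \<beta> \<alpha> :: real and ws :: 'a and w0 :: "nat \<Rightarrow> 'a" and t :: nat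
  assumes n_pos: "n \<ge> 1"
    and E_sub: "E \<subseteq> {1..n} \<times> {1..n}"
    and self_loops: "\<forall>i\<in>{1..n}. (i, i) \<in> E"
    and strong_conn: "strongly_connected_on n E"
    and p_fix: "\<forall>i\<in>{1..n}. (\<Sum>j=1..n. Wmat E i j * p j) = p i"
    and p_pos: "\<forall>i\<in>{1..n}. p i > 0"
    and p_sum: "(\<Sum>i=1..n. p i) = 1"
    and grad: "\<forall>i\<in>{1..n}. \<forall>x. GDERIV (f i) x :> g i x"
    and F1: "\<forall>i\<in>{1..n}. (Ls i)-lipschitz_on UNIV (g i)"
    and F2: "strongly_convex_with \<beta> (\<lambda>x. (1 / real n) * (\<Sum>i=1..n. f i x))"
    and beta_pos: "\<beta> > 0"
    and ws_min: "\<forall>x. (1 / real n) * (\<Sum>i=1..n. f i ws) \<le> (1 / real n) * (\<Sum>i=1..n. f i x)"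
    and alpha_pos: "\<alpha> > 0"
    and alpha_le: "\<alpha> \<le> 2 / (Max (Ls ` {1..n}) + \<beta>)"
  shows "let L = Max (Ls ` {1..n}); \<gamma> = \<beta> * L / (L + \<beta>); \<delta> = deltaY n E;
             \<sigma> = sigmaW n E p; w = wseq n E \<alpha> g w0;
             c = \<alpha> * L * \<delta> / real n * pinorm n p (\<lambda>i. 1 - real n * p i) * \<sigma> ^ t
         in norm (wbar n (w (Suc t)) - ws)
            \<le> (1 - \<gamma> * \<alpha> + c) * norm (wbar n (w t) - ws)
              + \<alpha> * L * \<delta> / real n * pinorm_blk n p (\<lambda>i. (real n * p i) *\<^sub>R wbar n (w t) - w t i)
              + c * norm ws"
proof -
  interpret push_sum_net n E p
    using n_pos E_sub self_loops strong_conn p_fix p_pos p_sum by unfold_locales auto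
  define L where "L = Max (Ls ` {1..n})"
  define G where "G x = (1 / real n) *\<^sub>R (\<Sum>i=1..n. g i x)" for x
  have lip: "L-lipschitz_on UNIV (g i)" if "i \<in> {1..n}" for i
    using F1 that by (auto intro: lipschitz_on_mono[of "Ls i" UNIV] simp: L_def)
  have "GDERIV (\<lambda>x. (1 / real n) * (\<Sum>i=1..n. f i x)) x :> G x" for x
    unfolding G_def using grad by (intro GDERIV_scaled_sum) simp
  moreover have "L-lipschitz_on UNIV G"
    unfolding G_def using n_pos lip by (rule lipschitz_on_average)
  ultimately have "norm (x - ws - \<alpha> *\<^sub>R G x) \<le> (1 - \<beta> * L / (L + \<beta>) * \<alpha>) * norm (x - ws)" for x
    using F2 beta_pos alpha_pos alpha_le ws_min
    by (intro gradient_step_contraction_to_minimizer) (auto simp: L_def)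
  from wbar_error_recursion[OF lip this[unfolded G_def] alpha_pos]
  show ?thesis
    unfolding Let_def L_def .
qed

end
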